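(* Let $\Phi,\Psi$ be ergodic random measures on $\mathbb R^d$ (on the same probability space) with positive finite intensities $\lambda_\Phi,\lambda_\Psi$. Let $F:\Omega\times\mathbb R^d\times\mathbb R^d\to[0,\infty)$ be measurable and flow-adapted, such that almost surely $F_\omega$ is a stable constrained density for $(\Phi_\omega,\Psi_\omega)$. Then almost surely: (i) if $\lambda_\Phi=\lambda_\Psi$, $F_\omega$ is balancing, i.e. the set of unexhausted sites has $\Phi_\omega$-measure $0$ and the set of unsated centers has $\Psi_\omega$-measure $0$; (ii) if $\lambda_\Phi<\lambda_\Psi$, there is no unexhausted site, and the set of unsated centers has infinite $\Psi_\omega$-measure; (iii) if $\lambda_\Phi>\lambda_\Psi$, there is no unsated center, and the set of unexhausted sites has infinite $\Phi_\omega$-measure.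
   Context: Random setup: measurable space $(\Omega,\mathcal F)$ with measurable flow $(\theta_s)_{s\in\mathbb R^d}$ ($(\omega,s)\mapsto\theta_s\omega$ measurable, $\theta_0=\mathrm{id}$, $\theta_s\theta_t=\theta_{s+t}$) and probability $\mathbb P$. Shifts act on measures by $(\theta_s\mu)(B)=\mu(B+s)$ and on functions of two variables by $(\theta_sf)(x,y)=f(x+s,y+s)$; $G$ is flow-adapted if $G(\theta_s\omega)=\theta_sG(\omega)$. A random measure is a measurable $\Phi:\Omega\to M$ ($M$: non-negative locally finite Borel measures on $\mathbb R^d$); stationary if $\mathbb P$ is invariant under all $\theta_s$ and $\Phi$ is flow-adapted; ergodic if also invariant events have probability 0 or 1. Intensity $\lambda$: $\mathbb E\Phi(B)=\lambda\mathcal L_d(B)$. Densities and stability for $(\varphi,\psi)$: a non-negative measurable $f$ on $\mathbb R^d\times\mathbb R^d$ is a constrained density if $\int f(x,\xi)\psi(d\xi)\le1$ for all $x$, $\int f(x,\xi)\varphi(dx)\le1$ for all $\xi$, and $f\le 1$; balancing if these integrals equal $1$ for $\varphi$-a.e. $x$ and $\psi$-a.e. $\xi$. A site $x_0$ is exhausted if $\int f(x_0,\xi)\psi(d\xi)=1$, else unexhausted; a center $\xi_0$ is sated if $\int f(x,\xi_0)\varphi(dx)=1$, else unsated. $x_0$ desires $\xi_0$ if $f(x_0,\xi_0)<1$ and either $x_0$ is unexhausted or some $\xi_1$ has $|x_0-\xi_1|>|x_0-\xi_0|$ and $f(x_0,\xi_1)>0$. $\xi_0$ desires $x_0$ if $f(x_0,\xi_0)<1$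 and either $\xi_0$ is unsated or some $x_1$ has $|x_1-\xi_0|>|x_0-\xi_0|$ and $f(x_1,\xi_0)>0$. $f$ is stable if no pair desires each other. *)

theory Defs
  imports "HOL-Probability.Probability"
begin

definition measurable_flow :: "'w measure \<Rightarrow> ('v::euclidean_space \<Rightarrow> 'w \<Rightarrow> 'w) \<Rightarrow> bool" where
  "measurable_flow P \<theta> \<longleftrightarrow>
     (\<lambda>(\<omega>, s). \<theta> s \<omega>) \<in> measurable (P \<Otimes>\<^sub>M lborel) P \<and>
     (\<forall>\<omega>\<in>space P. \<theta> 0 \<omega> = \<omega>) \<and>
     (\<forall>s t. \<forall>\<omega>\<in>space P. \<theta> s (\<theta> t \<omega>) = \<theta> (s + t) \<omega>)"

definition locally_finite_borel :: "'v::euclidean_space measure \<Rightarrow> bool" where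
  "locally_finite_borel \<mu> \<longleftrightarrow> sets \<mu> = sets borel \<and> (\<forall>K. compact K \<longrightarrow> emeasure \<mu> K < \<infinity>)"

text \<open>Random measure: measurable map into M, where M carries the sigma-algebra generated
  by the evaluation maps at Borel sets.\<close>
definition random_measure :: "'w measure \<Rightarrow> ('w \<Rightarrow> 'v::euclidean_space measure) \<Rightarrow> bool" where
  "random_measure P \<Phi> \<longleftrightarrow>
     (\<forall>\<omega>\<in>space P. locally_finite_borel (\<Phi> \<omega>)) \<and>
     (\<forall>B\<in>sets borel. (\<lambda>\<omega>. emeasure (\<Phi> \<omega>) B) \<in> borel_measurable P)"

definition flow_adapted_measure :: "'w measure \<Rightarrow> ('v::euclidean_space \<Rightarrow> 'w \<Rightarrow> 'w) \<Rightarrow> ('w \<Rightarrow> 'v measure) \<Rightarrow> bool" where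
  "flow_adapted_measure P \<theta> \<Phi> \<longleftrightarrow>
     (\<forall>s. \<forall>\<omega>\<in>space P. \<forall>B\<in>sets borel.
        emeasure (\<Phi> (\<theta> s \<omega>)) B = emeasure (\<Phi> \<omega>) ((\<lambda>x. x + s) ` B))"

definition stationary_rm :: "'w measure \<Rightarrow> ('v::euclidean_space \<Rightarrow> 'w \<Rightarrow> 'w) \<Rightarrow> ('w \<Rightarrow> 'v measure) \<Rightarrow> bool" where
  "stationary_rm P \<theta> \<Phi> \<longleftrightarrow>
     prob_space P \<and> measurable_flow P \<theta> \<and> random_measure P \<Phi> \<and>
     (\<forall>s. \<forall>A\<in>sets P. emeasure P (\<theta> s -` A \<inter> space P) = emeasure P A) \<and>
     flow_adapted_measure P \<theta> \<Phi>"

definition ergodic_rm :: "'w measure \<Rightarrow> ('v::euclidean_space \<Rightarrow> 'w \<Rightarrow> 'w) \<Rightarrow> ('w \<Rightarrow> 'v measure) \<Rightarrow> bool" where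
  "ergodic_rm P \<theta> \<Phi> \<longleftrightarrow>
     stationary_rm P \<theta> \<Phi> \<and>
     (\<forall>A\<in>sets P. (\<forall>s. \<theta> s -` A \<inter> space P = A) \<longrightarrow> emeasure P A = 0 \<or> emeasure P A = 1)"

definition has_intensity :: "'w measure \<Rightarrow> ('w \<Rightarrow> 'v::euclidean_space measure) \<Rightarrow> real \<Rightarrow> bool" where
  "has_intensity P \<Phi> l \<longleftrightarrow>
     (\<forall>B\<in>sets borel. (\<integral>\<^sup>+\<omega>. emeasure (\<Phi> \<omega>) B \<partial>P) = ennreal l * emeasure lborel B)"

definition flow_adapted_fun :: "'w measure \<Rightarrow> ('v::euclidean_space \<Rightarrow> 'w \<Rightarrow> 'w) \<Rightarrow> ('w \<Rightarrow> 'v \<Rightarrow> 'v \<Rightarrow> real) \<Rightarrow> bool" where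
  "flow_adapted_fun P \<theta> F \<longleftrightarrow>
     (\<forall>s. \<forall>\<omega>\<in>space P. \<forall>x y. F (\<theta> s \<omega>) x y = F \<omega> (x + s) (y + s))"

text \<open>Closed support of a measure; sites are points of supp phi, centers points of supp psi.\<close>
definition supp :: "'v::euclidean_space measure \<Rightarrow> 'v set" where
  "supp \<mu> = {x. \<forall>e>0. emeasure \<mu> (ball x e) > 0}"

definition constrained_density :: "'v::euclidean_space measure \<Rightarrow> 'v measure \<Rightarrow> ('v \<Rightarrow> 'v \<Rightarrow> real) \<Rightarrow> bool" where
  "constrained_density \<phi> \<psi> f \<longleftrightarrow>
     (\<lambda>(x, y). f x y) \<in> borel_measurable borel \<and>
     (\<forall>x y. 0 \<le> f x y \<and> f x y \<le> 1) \<and>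
     (\<forall>x. (\<integral>\<^sup>+\<xi>. ennreal (f x \<xi>) \<partial>\<psi>) \<le> 1) \<and>
     (\<forall>\<xi>. (\<integral>\<^sup>+x. ennreal (f x \<xi>) \<partial>\<phi>) \<le> 1)"

definition exhausted :: "'v::euclidean_space measure \<Rightarrow> ('v \<Rightarrow> 'v \<Rightarrow> real) \<Rightarrow> 'v \<Rightarrow> bool" where
  "exhausted \<psi> f x \<longleftrightarrow> (\<integral>\<^sup>+\<xi>. ennreal (f x \<xi>) \<partial>\<psi>) = 1"

definition sated :: "'v::euclidean_space measure \<Rightarrow> ('v \<Rightarrow> 'v \<Rightarrow> real) \<Rightarrow> 'v \<Rightarrow> bool" where
  "sated \<phi> f \<xi> \<longleftrightarrow> (\<integral>\<^sup>+x. ennreal (f x \<xi>) \<partial>\<phi>) = 1"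

definition site_desires :: "'v::euclidean_space measure \<Rightarrow> ('v \<Rightarrow> 'v \<Rightarrow> real) \<Rightarrow> 'v \<Rightarrow> 'v \<Rightarrow> bool" where
  "site_desires \<psi> f x0 \<xi>0 \<longleftrightarrow> f x0 \<xi>0 < 1 \<and>
     (\<not> exhausted \<psi> f x0 \<or> (\<exists>\<xi>1. dist x0 \<xi>1 > dist x0 \<xi>0 \<and> f x0 \<xi>1 > 0))"

definition center_desires :: "'v::euclidean_space measure \<Rightarrow> ('v \<Rightarrow> 'v \<Rightarrow> real) \<Rightarrow> 'v \<Rightarrow> 'v \<Rightarrow> bool" where
  "center_desires \<phi> f \<xi>0 x0 \<longleftrightarrow> f x0 \<xi>0 < 1 \<and>
     (\<not> sated \<phi> f \<xi>0 \<or> (\<exists>x1. dist x1 \<xi>0 > dist x0 \<xi>0 \<and> f x1 \<xi>0 > 0))"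

definition stable :: "'v::euclidean_space measure \<Rightarrow> 'v measure \<Rightarrow> ('v \<Rightarrow> 'v \<Rightarrow> real) \<Rightarrow> bool" where
  "stable \<phi> \<psi> f \<longleftrightarrow>
     (\<forall>x0\<in>supp \<phi>. \<forall>\<xi>0\<in>supp \<psi>. \<not> (site_desires \<psi> f x0 \<xi>0 \<and> center_desires \<phi> f \<xi>0 x0))"

end

theory Submission
  imports Defs
begin

(*
  Write d_sites for the expected capacity left unused by the sites in the unit ball B,
  d_centers for the expected unfilled demand of the centers in B, and m for the expected
  mass sent by the sites in B. The mass transport principle (average over the translates
  B - s and use stationarity) shows that m is also the expected mass received by the
  centers in B, so d_sites + m = lambda_Phi |B| and d_centers + m = lambda_Psi |B|.

  By Campbell's formula and ergodicity a deficit is either 0, and then almost surely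
  almost every site is exhausted (resp. center sated), or positive, and then almost
  surely the unexhausted sites (resp. unsated centers) have infinite mass. Stability
  forces f x xi >= 1 for every unexhausted site x and unsated center xi; hence infinitely
  many unexhausted sites would give an unsated center infinite mass, so all centers are
  sated, and symmetrically. Thus the two deficits cannot both be positive, and comparing
  the intensities yields the three cases.
*)

lemma measurable_nn_integral_finite_kernel:
  fixes \<kappa> :: "'a \<Rightarrow> 'b measure"
  assumes sets_\<kappa>: "\<And>a. a \<in> space N \<Longrightarrow> sets (\<kappa> a) = sets M"
    and finite_\<kappa>: "\<And>a. a \<in> space N \<Longrightarrow> emeasure (\<kappa> a) (space M) < \<infinity>"
    and emeasure_\<kappa>: "\<And>B. B \<in> sets M \<Longrightarrow> (\<lambda>a. emeasure (\<kappa> a) B) \<in> borel_measurable N"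
    and g: "case_prod g \<in> borel_measurable (N \<Otimes>\<^sub>M M)"
    and nonempty: "space M \<noteq> {}"
  shows "(\<lambda>a. \<integral>\<^sup>+x. g a x \<partial>\<kappa> a) \<in> borel_measurable N"
proof -
  define c where "c a = 1 + emeasure (\<kappa> a) (space M)" for a
  define K where "K a = scale_measure (1 / c a) (\<kappa> a)" for a
  have [measurable]: "c \<in> borel_measurable N"
    unfolding c_def using emeasure_\<kappa>[OF sets.top] by measurable
  have c: "c a \<noteq> 0" "c a < \<infinity>" if "a \<in> space N" for a
    using finite_\<kappa>[OF that] by (auto simp: c_def ennreal_add_less_top)
  have "K \<in> measurable N (subprob_algebra M)"
  proof (rule measurable_subprob_algebra)
    fix a assume a: "a \<in> space N"
    show "sets (K a) = sets M"
      using sets_\<kappa>[OF a] by (simp add: K_def)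
    have "emeasure (K a) (space (K a)) \<le> 1 / c a * c a"
      using sets_eq_imp_space_eq[OF sets_\<kappa>[OF a]]
      by (auto simp: K_def space_scale_measure c_def intro!: mult_left_mono)
    also have "\<dots> = 1"
      using c[OF a] by (simp add: ennreal_divide_times)
    finally show "subprob_space (K a)"
      by (intro subprob_spaceI)
        (auto simp: K_def space_scale_measure sets_eq_imp_space_eq[OF sets_\<kappa>[OF a]] nonempty)
  next
    fix B assume "B \<in> sets M"
    then show "(\<lambda>a. emeasure (K a) B) \<in> borel_measurable N"
      unfolding K_def emeasure_scale_measure using emeasure_\<kappa> by measurable
  qed
  then have "(\<lambda>a. c a * \<integral>\<^sup>+x. g a x \<partial>K a) \<in> borel_measurable N"
    using nn_integral_measurable_subprob_algebra2[OF g] by measurable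
  moreover have "c a * (\<integral>\<^sup>+x. g a x \<partial>K a) = (\<integral>\<^sup>+x. g a x \<partial>\<kappa> a)" if a: "a \<in> space N" for a
  proof -
    have "g a \<in> borel_measurable (\<kappa> a)"
      using measurable_Pair2[OF g a] by (simp add: measurable_cong_sets[OF sets_\<kappa>[OF a] refl])
    then show ?thesis
      using c[OF a] by (simp add: K_def nn_integral_scale_measure ennreal_times_divide flip: mult.assoc)
  qed
  ultimately show ?thesis
    by (rule measurable_cong[THEN iffD1, rotated])
qed

lemma UN_cball_nat: "(\<Union>n::nat. cball (0::'a::real_normed_vector) (real n)) = UNIV"
  by (force simp: real_arch_simple)

lemma locally_finite_borel_sigma_finite:
  assumes "locally_finite_borel (\<mu> :: 'v::euclidean_space measure)"
  shows "sigma_finite_measure \<mu>"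
proof
  have sets: "sets \<mu> = sets borel" and "\<And>n::nat. emeasure \<mu> (cball 0 (real n)) < \<infinity>"
    using assms by (auto simp: locally_finite_borel_def)
  then show "\<exists>A. countable A \<and> A \<subseteq> sets \<mu> \<and> \<Union>A = space \<mu> \<and> (\<forall>a\<in>A. emeasure \<mu> a \<noteq> \<infinity>)"
    by (intro exI[of _ "range (\<lambda>n::nat. cball 0 (real n))"])
      (auto simp: sets_eq_imp_space_eq[OF sets] UN_cball_nat less_top)
qed

lemma nn_integral_eq_SUP_restrict_cball:
  fixes \<mu> :: "'v::euclidean_space measure"
  assumes sets: "sets \<mu> = sets borel" and [measurable]: "g \<in> borel_measurable borel"
  shows "(\<integral>\<^sup>+x. g x \<partial>\<mu>) = (SUP n. \<integral>\<^sup>+x. g x \<partial>density \<mu> (indicator (cball 0 (real n))))"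
proof -
  note [measurable_cong] = sets
  have [measurable]: "cball (0::'v) r \<in> sets borel" for r
    by simp
  have [simp]: "g \<in> borel_measurable \<mu>" "indicator (cball (0::'v) r) \<in> borel_measurable \<mu>"
    "(\<lambda>x. indicator (cball (0::'v) r) x * g x) \<in> borel_measurable \<mu>" for r
    by measurable
  have "incseq (\<lambda>n x. indicator (cball (0::'v) (real n)) x * g x)"
    by (auto simp: incseq_def le_fun_def intro!: mult_right_mono split: split_indicator)
  moreover have "(SUP n. indicator (cball 0 (real n)) x * g x) = g x" for x
  proof -
    obtain m :: nat where "norm x \<le> real m"
      using real_arch_simple by blast
    then have "(SUP n. indicator (cball 0 (real n)) x :: ennreal) = 1"
      by (intro antisym SUP_least SUP_upper2[of m]) (auto split: split_indicator)
    then show ?thesis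
      by (simp flip: SUP_mult_right_ennreal)
  qed
  ultimately show ?thesis
    by (simp add: nn_integral_density nn_integral_monotone_convergence_SUP[symmetric])
qed

lemma measurable_nn_integral_locally_finite_kernel:
  fixes \<kappa> :: "'a \<Rightarrow> 'v::euclidean_space measure"
  assumes lf: "\<And>a. a \<in> space N \<Longrightarrow> locally_finite_borel (\<kappa> a)"
    and emeasure_\<kappa>: "\<And>B. B \<in> sets borel \<Longrightarrow> (\<lambda>a. emeasure (\<kappa> a) B) \<in> borel_measurable N"
    and g: "case_prod g \<in> borel_measurable (N \<Otimes>\<^sub>M borel)"
  shows "(\<lambda>a. \<integral>\<^sup>+x. g a x \<partial>\<kappa> a) \<in> borel_measurable N"
proof -
  define C where "C n = cball (0::'v) (real n)" for n
  have C[measurable]: "C n \<in> sets borel" for n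
    by (simp add: C_def)
  have sets: "sets (\<kappa> a) = sets borel" if "a \<in> space N" for a
    using lf[OF that] by (simp add: locally_finite_borel_def)
  have "(\<lambda>a. \<integral>\<^sup>+x. g a x \<partial>density (\<kappa> a) (indicator (C n))) \<in> borel_measurable N" for n
  proof (rule measurable_nn_integral_finite_kernel[OF _ _ _ g])
    fix a assume a: "a \<in> space N"
    then show "sets (density (\<kappa> a) (indicator (C n))) = sets borel"
      by (simp add: sets)
    show "emeasure (density (\<kappa> a) (indicator (C n))) (space borel) < \<infinity>"
      using lf[OF a] by (simp add: emeasure_restricted sets[OF a] locally_finite_borel_def C_def)
  next
    fix B :: "'v set" assume "B \<in> sets borel"
    then show "(\<lambda>a. emeasure (density (\<kappa> a) (indicator (C n))) B) \<in> borel_measurable N"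
      using emeasure_\<kappa>[of "C n \<inter> B"]
      by (subst measurable_cong[where g="\<lambda>a. emeasure (\<kappa> a) (C n \<inter> B)"])
        (auto simp: emeasure_restricted sets)
  qed simp
  then have "(\<lambda>a. SUP n. \<integral>\<^sup>+x. g a x \<partial>density (\<kappa> a) (indicator (C n))) \<in> borel_measurable N"
    by measurable
  moreover have "(SUP n. \<integral>\<^sup>+x. g a x \<partial>density (\<kappa> a) (indicator (C n))) = (\<integral>\<^sup>+x. g a x \<partial>\<kappa> a)"
    if "a \<in> space N" for a
    using measurable_Pair2[OF g that]
    by (simp add: C_def nn_integral_eq_SUP_restrict_cball[OF sets[OF that]])
  ultimately show ?thesis
    by (rule measurable_cong[THEN iffD1, rotated])
qed

lemma null_ball_disjoint_supp:
  assumes "sets \<mu> = sets borel" and "emeasure \<mu> (ball x e) = 0"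
  shows "ball x e \<inter> supp \<mu> = {}"
proof (intro equalityI subsetI, elim IntE)
  fix y assume "y \<in> ball x e" "y \<in> supp \<mu>"
  then have "0 < emeasure \<mu> (ball y (e - dist x y))"
    by (simp add: supp_def)
  also have "\<dots> \<le> emeasure \<mu> (ball x e)"
    using assms(1) by (intro emeasure_mono) (auto simp: ball_subset_ball_iff dist_commute)
  finally show "y \<in> {}"
    using assms(2) by simp
qed simp

lemma closed_supp:
  assumes "sets \<mu> = sets borel"
  shows "closed (supp (\<mu> :: 'v::euclidean_space measure))"
  unfolding closed_def
proof (rule openI)
  fix x assume "x \<in> - supp \<mu>"
  then obtain e where "e > 0" "emeasure \<mu> (ball x e) = 0"
    by (auto simp: supp_def)
  then show "\<exists>e>0. ball x e \<subseteq> - supp \<mu>"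
    using null_ball_disjoint_supp[OF assms] by blast
qed

lemma emeasure_Compl_supp_eq_0:
  assumes sets: "sets \<mu> = sets borel"
  shows "emeasure \<mu> (- supp (\<mu> :: 'v::euclidean_space measure)) = 0"
proof -
  define \<B> where "\<B> = {ball x e | x e. emeasure \<mu> (ball x e) = 0}"
  obtain \<B>' where \<B>': "\<B>' \<subseteq> \<B>" "countable \<B>'" "\<Union>\<B>' = \<Union>\<B>"
    using Lindelof[of \<B>] unfolding \<B>_def by blast
  have "\<Union>\<B> = - supp \<mu>"
  proof
    show "\<Union>\<B> \<subseteq> - supp \<mu>"
      using null_ball_disjoint_supp[OF sets] by (auto simp: \<B>_def)
    show "- supp \<mu> \<subseteq> \<Union>\<B>"
      by (force simp: \<B>_def supp_def not_less)
  qed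
  moreover have "(\<Union>B\<in>\<B>'. B) \<in> null_sets \<mu>"
    using \<B>' by (intro null_sets_UN') (auto simp: \<B>_def null_sets_def sets)
  ultimately show ?thesis
    using \<B>'(3) by (simp add: null_sets_def)
qed

lemma AE_eq_1_if_nn_integral_one_minus_eq_0:
  fixes h :: "'a \<Rightarrow> ennreal"
  assumes "h \<in> borel_measurable M" and "\<And>x. h x \<le> 1" and "(\<integral>\<^sup>+x. 1 - h x \<partial>M) = 0"
  shows "AE x in M. h x = 1"
proof -
  have "AE x in M. 1 - h x = 0"
    using assms(1,3) by (subst nn_integral_0_iff_AE[symmetric]) auto
  then show ?thesis
    by eventually_elim (use assms(2) in \<open>auto simp: diff_eq_0_iff_ennreal intro: antisym\<close>)
qed

lemma emeasure_supp_ne_1_eq_infinity: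
  fixes h :: "'v::euclidean_space \<Rightarrow> ennreal"
  assumes sets: "sets \<mu> = sets borel" and h: "h \<in> borel_measurable borel"
    and "(\<integral>\<^sup>+x. 1 - h x \<partial>\<mu>) = \<infinity>"
  shows "{x \<in> supp \<mu>. h x \<noteq> 1} \<in> sets \<mu>" and "emeasure \<mu> {x \<in> supp \<mu>. h x \<noteq> 1} = \<infinity>"
proof -
  have [measurable]: "supp \<mu> \<in> sets borel"
    by (rule borel_closed[OF closed_supp[OF sets]])
  show U: "{x \<in> supp \<mu>. h x \<noteq> 1} \<in> sets \<mu>"
    unfolding sets using h by measurable
  have "\<infinity> = (\<integral>\<^sup>+x. 1 - h x \<partial>\<mu>)"
    using assms(3) by simp
  also have "\<dots> \<le> (\<integral>\<^sup>+x. indicator {x. h x \<noteq> 1} x \<partial>\<mu>)"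
    by (intro nn_integral_mono) (auto split: split_indicator)
  also have "\<dots> = emeasure \<mu> {x. h x \<noteq> 1}"
    using h by (intro nn_integral_indicator) (simp add: sets)
  also have "\<dots> \<le> emeasure \<mu> ({x \<in> supp \<mu>. h x \<noteq> 1} \<union> - supp \<mu>)"
    using U h by (intro emeasure_mono) (auto simp: sets)
  also have "\<dots> = emeasure \<mu> {x \<in> supp \<mu>. h x \<noteq> 1}"
    using U emeasure_Compl_supp_eq_0[OF sets]
    by (intro emeasure_Un_null_set) (auto simp: null_sets_def sets borel_closed closed_supp)
  finally show "emeasure \<mu> {x \<in> supp \<mu>. h x \<noteq> 1} = \<infinity>"
    by (simp add: top_unique)
qed

lemma exhausted_swap: "exhausted \<phi> (\<lambda>\<xi> x. f x \<xi>) = sated \<phi> f"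
  by (simp add: fun_eq_iff exhausted_def sated_def)

lemma sated_swap: "sated \<psi> (\<lambda>\<xi> x. f x \<xi>) = exhausted \<psi> f"
  by (simp add: fun_eq_iff exhausted_def sated_def)

lemma site_desires_swap: "site_desires \<phi> (\<lambda>\<xi> x. f x \<xi>) \<xi> x \<longleftrightarrow> center_desires \<phi> f \<xi> x"
  unfolding site_desires_def center_desires_def exhausted_swap[of \<phi> f] by (simp add: dist_commute)

lemma center_desires_swap: "center_desires \<psi> (\<lambda>\<xi> x. f x \<xi>) x \<xi> \<longleftrightarrow> site_desires \<psi> f x \<xi>"
  unfolding site_desires_def center_desires_def sated_swap[of \<psi> f] by (simp add: dist_commute)

lemma stable_swap: "stable \<psi> \<phi> (\<lambda>\<xi> x. f x \<xi>) \<longleftrightarrow> stable \<phi> \<psi> f"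
  unfolding stable_def site_desires_swap[of \<phi> f] center_desires_swap[of \<psi> f] by blast

lemma stable_unexhausted_unsated_ge_1:
  assumes "stable \<phi> \<psi> f"
    and "x \<in> supp \<phi>" "\<not> exhausted \<psi> f x" and "\<xi> \<in> supp \<psi>" "\<not> sated \<phi> f \<xi>"
  shows "1 \<le> f x \<xi>"
proof (rule ccontr)
  assume "\<not> 1 \<le> f x \<xi>"
  then have "site_desires \<psi> f x \<xi>" "center_desires \<phi> f \<xi> x"
    using assms(3,5) by (simp_all add: site_desires_def center_desires_def)
  then show False
    using assms(1,2,4) by (auto simp: stable_def)
qed

lemma stable_exhausted_if_infinite_unsated:
  assumes "stable \<phi> \<psi> f" and bounded: "(\<integral>\<^sup>+\<xi>. ennreal (f x \<xi>) \<partial>\<psi>) \<le> 1"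
    and U: "{\<xi> \<in> supp \<psi>. \<not> sated \<phi> f \<xi>} \<in> sets \<psi>"
    and infinite: "emeasure \<psi> {\<xi> \<in> supp \<psi>. \<not> sated \<phi> f \<xi>} = \<infinity>"
    and "x \<in> supp \<phi>"
  shows "exhausted \<psi> f x"
proof (rule ccontr)
  assume "\<not> exhausted \<psi> f x"
  then have "indicator {\<xi> \<in> supp \<psi>. \<not> sated \<phi> f \<xi>} \<xi> \<le> ennreal (f x \<xi>)" for \<xi>
    using stable_unexhausted_unsated_ge_1[OF assms(1,5)] by (auto split: split_indicator)
  then have "(\<integral>\<^sup>+\<xi>. indicator {\<xi> \<in> supp \<psi>. \<not> sated \<phi> f \<xi>} \<xi> \<partial>\<psi>) \<le> (\<integral>\<^sup>+\<xi>. ennreal (f x \<xi>) \<partial>\<psi>)"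
    by (intro nn_integral_mono)
  then show False
    using U bounded infinite by (simp add: top_unique)
qed

lemma stable_sated_if_infinite_unexhausted:
  assumes "stable \<phi> \<psi> f" and "(\<integral>\<^sup>+x. ennreal (f x \<xi>) \<partial>\<phi>) \<le> 1"
    and "{x \<in> supp \<phi>. \<not> exhausted \<psi> f x} \<in> sets \<phi>"
    and "emeasure \<phi> {x \<in> supp \<phi>. \<not> exhausted \<psi> f x} = \<infinity>"
    and "\<xi> \<in> supp \<psi>"
  shows "sated \<phi> f \<xi>"
  using stable_exhausted_if_infinite_unsated[of \<psi> \<phi> "\<lambda>\<xi> x. f x \<xi>"] assms stable_swap[of \<psi> \<phi> f]
  unfolding sated_swap[of \<psi> f] exhausted_swap[of \<phi> f] by blast

lemma measurable_compose_split2: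
  assumes "(\<lambda>p. k (fst p) (snd p)) \<in> measurable (M \<Otimes>\<^sub>M N) K"
  shows "a \<in> measurable X M \<Longrightarrow> b \<in> measurable X N \<Longrightarrow> (\<lambda>z. k (a z) (b z)) \<in> measurable X K"
  using measurable_compose[OF measurable_Pair assms] by simp

lemma measurable_compose_split3:
  assumes "(\<lambda>p. k (fst p) (fst (snd p)) (snd (snd p))) \<in> measurable (M \<Otimes>\<^sub>M N \<Otimes>\<^sub>M N') K"
  shows "a \<in> measurable X M \<Longrightarrow> b \<in> measurable X N \<Longrightarrow> c \<in> measurable X N'
    \<Longrightarrow> (\<lambda>z. k (a z) (b z) (c z)) \<in> measurable X K"
  using measurable_compose[OF measurable_Pair[OF _ measurable_Pair] assms] by simp

lemma Tonelli:
  assumes "sigma_finite_measure M" and "sigma_finite_measure N"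
    and "case_prod f \<in> borel_measurable (M \<Otimes>\<^sub>M N)"
  shows "(\<integral>\<^sup>+y. \<integral>\<^sup>+x. f x y \<partial>M \<partial>N) = (\<integral>\<^sup>+x. \<integral>\<^sup>+y. f x y \<partial>N \<partial>M)"
  using assms by (intro pair_sigma_finite.Fubini') (auto simp: pair_sigma_finite_def)

lemma ball_in_borel[measurable]: "ball (c::'a::metric_space) r \<in> sets borel"
  by simp

lemma emeasure_lborel_unit_ball:
  "0 < emeasure lborel (ball (0::'v::euclidean_space) 1)"
  "emeasure lborel (ball (0::'v::euclidean_space) 1) < \<infinity>"
  by (simp_all add: emeasure_ball emeasure_lborel_ball_finite)

lemma nn_integral_indicator_ball_diff:
  fixes x :: "'v::euclidean_space"
  shows "(\<integral>\<^sup>+s. indicator (ball 0 1) (x - s) \<partial>lborel) = emeasure lborel (ball (0::'v) 1)"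
proof -
  have "(\<lambda>s. indicator (ball 0 1) (x - s) :: ennreal) = indicator (ball x 1)"
    by (auto simp: indicator_def dist_norm norm_minus_commute fun_eq_iff)
  then show ?thesis
    by (simp add: emeasure_ball)
qed

lemma nn_integral_indicator_ball_add:
  fixes x :: "'v::euclidean_space"
  shows "(\<integral>\<^sup>+s. indicator (ball 0 1) (x + s) \<partial>lborel) = emeasure lborel (ball (0::'v) 1)"
proof -
  have "(\<lambda>s. indicator (ball 0 1) (x + s) :: ennreal) = indicator (ball (- x) 1)"
    using norm_minus_cancel[of "x + s" for s] by (auto simp: indicator_def dist_norm fun_eq_iff)
  then show ?thesis
    by (simp add: emeasure_ball)
qed

lemma nn_integral_unit_ball_translates:
  fixes \<mu> :: "'v::euclidean_space measure"
  assumes "sigma_finite_measure \<mu>" and sets: "sets \<mu> = sets borel"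
    and [measurable]: "f \<in> borel_measurable borel"
  shows "emeasure lborel (ball (0::'v) 1) * (\<integral>\<^sup>+x. f x \<partial>\<mu>)
       = (\<integral>\<^sup>+s. \<integral>\<^sup>+x. indicator (ball 0 1) (x - s) * f x \<partial>\<mu> \<partial>lborel)"
proof -
  note [measurable_cong] = sets
  have "emeasure lborel (ball (0::'v) 1) * (\<integral>\<^sup>+x. f x \<partial>\<mu>)
      = (\<integral>\<^sup>+x. (\<integral>\<^sup>+s. indicator (ball 0 1) (x - s) \<partial>lborel) * f x \<partial>\<mu>)"
    by (simp add: nn_integral_indicator_ball_diff nn_integral_cmult)
  also have "\<dots> = (\<integral>\<^sup>+x. \<integral>\<^sup>+s. indicator (ball 0 1) (x - s) * f x \<partial>lborel \<partial>\<mu>)"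
    by (intro nn_integral_cong nn_integral_multc[symmetric]) measurable
  also have "\<dots> = (\<integral>\<^sup>+s. \<integral>\<^sup>+x. indicator (ball 0 1) (x - s) * f x \<partial>\<mu> \<partial>lborel)"
    using assms(1) by (intro Tonelli[symmetric] sigma_finite_lborel) measurable
  finally show ?thesis .
qed

locale stationary_flow =
  fixes P :: "'w measure" and \<theta> :: "'v::euclidean_space \<Rightarrow> 'w \<Rightarrow> 'w"
  assumes prob_space: "prob_space P" and flow: "measurable_flow P \<theta>"
    and flow_invariant: "\<And>s A. A \<in> sets P \<Longrightarrow> emeasure P (\<theta> s -` A \<inter> space P) = emeasure P A"
begin

lemma measurable_flow_map[measurable]: "\<theta> s \<in> measurable P P"
proof -
  have "(\<lambda>(\<omega>, s). \<theta> s \<omega>) \<in> measurable (P \<Otimes>\<^sub>M lborel) P"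
    using flow by (simp add: measurable_flow_def)
  from measurable_compose[OF measurable_Pair2' this]
  show ?thesis
    by simp
qed

lemma nn_integral_flow_invariant:
  assumes "f \<in> borel_measurable P"
  shows "(\<integral>\<^sup>+\<omega>. f (\<theta> s \<omega>) \<partial>P) = (\<integral>\<^sup>+\<omega>. f \<omega> \<partial>P)"
proof -
  have "distr P P (\<theta> s) = P"
    by (rule measure_eqI) (simp_all add: emeasure_distr flow_invariant)
  then show ?thesis
    using nn_integral_distr[OF measurable_flow_map[of s], of f] assms by simp
qed

definition ergodic :: bool where
  "ergodic \<longleftrightarrow>
     (\<forall>A\<in>sets P. (\<forall>s. \<theta> s -` A \<inter> space P = A) \<longrightarrow> emeasure P A = 0 \<or> emeasure P A = 1)"

lemma AE_infinite_if_invariant: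
  assumes ergodic and Z[measurable]: "Z \<in> borel_measurable P"
    and invariant: "\<And>s \<omega>. \<omega> \<in> space P \<Longrightarrow> Z (\<theta> s \<omega>) = Z \<omega>"
    and infinite: "(\<integral>\<^sup>+\<omega>. Z \<omega> \<partial>P) = \<infinity>"
  shows "AE \<omega> in P. Z \<omega> = \<infinity>"
proof -
  interpret prob_space P
    by (rule prob_space)
  define A where "A n = {\<omega> \<in> space P. Z \<omega> \<le> of_nat n}" for n :: nat
  have A[measurable]: "A n \<in> sets P" for n
    unfolding A_def by measurable
  have "emeasure P (A n) = 0" for n
  proof (rule ccontr)
    have "\<forall>s. \<theta> s -` A n \<inter> space P = A n"
      using invariant measurable_space[OF measurable_flow_map] by (auto simp: A_def)
    moreover assume "emeasure P (A n) \<noteq> 0"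
    ultimately have "emeasure P (A n) = 1"
      using \<open>ergodic\<close> A[of n] unfolding ergodic_def by blast
    then have "AE \<omega> in P. Z \<omega> \<le> of_nat n"
      using AE_in_set_eq_1[OF A] by (auto simp: A_def emeasure_eq_measure)
    then have "(\<integral>\<^sup>+\<omega>. Z \<omega> \<partial>P) \<le> of_nat n"
      using nn_integral_mono_AE[of "\<lambda>\<omega>. Z \<omega>" "\<lambda>_. of_nat n" P] by (simp add: emeasure_space_1)
    then show False
      using infinite by (simp add: of_nat_less_top top_unique)
  qed
  then have "(\<Union>n. A n) \<in> null_sets P"
    by (intro null_sets_UN) (simp add: null_sets_def)
  moreover have "{\<omega> \<in> space P. Z \<omega> \<noteq> \<infinity>} \<subseteq> (\<Union>n. A n)"
  proof
    fix \<omega> assume \<omega>: "\<omega> \<in> {\<omega> \<in> space P. Z \<omega> \<noteq> \<infinity>}"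
    then obtain n where "Z \<omega> < of_nat n"
      using ennreal_Ex_less_of_nat by (auto simp: less_top)
    with \<omega> show "\<omega> \<in> (\<Union>n. A n)"
      by (auto simp: A_def intro!: less_imp_le)
  qed
  ultimately show ?thesis
    by (rule AE_I')
qed

definition adapted_random_measure :: "('w \<Rightarrow> 'v measure) \<Rightarrow> bool" where
  "adapted_random_measure \<Phi> \<longleftrightarrow> random_measure P \<Phi> \<and> flow_adapted_measure P \<theta> \<Phi>"

context
  fixes \<Phi> :: "'w \<Rightarrow> 'v measure"
  assumes adapted: "adapted_random_measure \<Phi>"
begin

lemma sets_random_measure: "\<omega> \<in> space P \<Longrightarrow> sets (\<Phi> \<omega>) = sets borel"
  using adapted by (simp add: adapted_random_measure_def random_measure_def locally_finite_borel_def)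

lemma sigma_finite_random_measure: "\<omega> \<in> space P \<Longrightarrow> sigma_finite_measure (\<Phi> \<omega>)"
  using adapted
  by (auto simp: adapted_random_measure_def random_measure_def intro: locally_finite_borel_sigma_finite)

lemma measurable_nn_integral_random_measure:
  assumes h: "h \<in> measurable N P"
    and g: "(\<lambda>(a, x). g a x) \<in> borel_measurable (N \<Otimes>\<^sub>M borel)"
  shows "(\<lambda>a. \<integral>\<^sup>+x. g a x \<partial>\<Phi> (h a)) \<in> borel_measurable N"
proof (rule measurable_nn_integral_locally_finite_kernel)
  show "locally_finite_borel (\<Phi> (h a))" if "a \<in> space N" for a
    using adapted measurable_space[OF h that] by (simp add: adapted_random_measure_def random_measure_def)
  show "(\<lambda>a. emeasure (\<Phi> (h a)) B) \<in> borel_measurable N" if "B \<in> sets borel" for B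
    using adapted that
    by (auto simp: adapted_random_measure_def random_measure_def intro: measurable_compose[OF h])
qed (use g in simp)

lemma random_measure_flow:
  assumes \<omega>: "\<omega> \<in> space P"
  shows "\<Phi> (\<theta> s \<omega>) = distr (\<Phi> \<omega>) borel (\<lambda>x. x - s)"
proof (rule measure_eqI)
  have \<theta>\<omega>: "\<theta> s \<omega> \<in> space P"
    using measurable_space[OF measurable_flow_map \<omega>] .
  then show "sets (\<Phi> (\<theta> s \<omega>)) = sets (distr (\<Phi> \<omega>) borel (\<lambda>x. x - s))"
    by (simp add: sets_random_measure)
  fix B assume "B \<in> sets (\<Phi> (\<theta> s \<omega>))"
  then have B: "B \<in> sets borel"
    by (simp add: sets_random_measure \<theta>\<omega>)
  have "(\<lambda>x. x - s) -` B \<inter> space (\<Phi> \<omega>) = (\<lambda>x. x + s) ` B"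
    using sets_eq_imp_space_eq[OF sets_random_measure[OF \<omega>]]
    by (auto simp: image_iff) (metis diff_add_cancel)
  then show "emeasure (\<Phi> (\<theta> s \<omega>)) B = emeasure (distr (\<Phi> \<omega>) borel (\<lambda>x. x - s)) B"
    using adapted \<omega> B
    by (simp add: emeasure_distr measurable_cong_sets[OF sets_random_measure[OF \<omega>] refl]
        adapted_random_measure_def flow_adapted_measure_def)
qed

lemma nn_integral_random_measure_flow:
  assumes "\<omega> \<in> space P" and "f \<in> borel_measurable borel"
  shows "(\<integral>\<^sup>+x. f x \<partial>\<Phi> (\<theta> s \<omega>)) = (\<integral>\<^sup>+x. f (x - s) \<partial>\<Phi> \<omega>)"
  using assms unfolding random_measure_flow[OF assms(1)]
  by (intro nn_integral_distr) (simp_all add: measurable_cong_sets[OF sets_random_measure refl])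

context
  fixes k :: "'w \<Rightarrow> 'v \<Rightarrow> ennreal"
  assumes k: "(\<lambda>(\<omega>, x). k \<omega> x) \<in> borel_measurable (P \<Otimes>\<^sub>M borel)"
begin

lemma measurable_nn_integral_weighted:
  assumes [measurable]: "u \<in> borel_measurable borel"
  shows "(\<lambda>\<omega>. \<integral>\<^sup>+x. u x * k \<omega> x \<partial>\<Phi> \<omega>) \<in> borel_measurable P"
proof -
  note [measurable] = measurable_compose_split2[OF k[unfolded split_beta']]
  show ?thesis
    by (intro measurable_nn_integral_random_measure[OF measurable_ident_sets]) measurable
qed

context
  assumes k_adapted: "\<And>s \<omega> x. \<omega> \<in> space P \<Longrightarrow> k (\<theta> s \<omega>) x = k \<omega> (x + s)"
begin

lemma nn_integral_random_measure_adapted_flow: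
  assumes "\<omega> \<in> space P" and "u \<in> borel_measurable borel"
  shows "(\<integral>\<^sup>+x. u x * k (\<theta> s \<omega>) x \<partial>\<Phi> (\<theta> s \<omega>)) = (\<integral>\<^sup>+x. u (x - s) * k \<omega> x \<partial>\<Phi> \<omega>)"
proof -
  note [measurable] = measurable_compose_split2[OF k[unfolded split_beta']] assms
  have "\<theta> s \<omega> \<in> space P"
    using measurable_space[OF measurable_flow_map assms(1)] .
  then have "(\<integral>\<^sup>+x. u x * k (\<theta> s \<omega>) x \<partial>\<Phi> (\<theta> s \<omega>)) = (\<integral>\<^sup>+x. u (x - s) * k (\<theta> s \<omega>) (x - s) \<partial>\<Phi> \<omega>)"
    using assms by (intro nn_integral_random_measure_flow) measurable
  then show ?thesis
    using k_adapted[OF assms(1)] by simp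
qed

lemma expectation_random_measure_shift:
  assumes [measurable]: "u \<in> borel_measurable borel"
  shows "(\<integral>\<^sup>+\<omega>. \<integral>\<^sup>+x. u (x - s) * k \<omega> x \<partial>\<Phi> \<omega> \<partial>P) = (\<integral>\<^sup>+\<omega>. \<integral>\<^sup>+x. u x * k \<omega> x \<partial>\<Phi> \<omega> \<partial>P)"
  using nn_integral_flow_invariant[OF measurable_nn_integral_weighted[OF assms], of s]
  by (simp add: nn_integral_random_measure_adapted_flow cong: nn_integral_cong)

lemma expectation_random_measure_Campbell:
  "emeasure lborel (ball (0::'v) 1) * (\<integral>\<^sup>+\<omega>. \<integral>\<^sup>+x. k \<omega> x \<partial>\<Phi> \<omega> \<partial>P)
     = (\<integral>\<^sup>+\<omega>. \<integral>\<^sup>+x. indicator (ball 0 1) x * k \<omega> x \<partial>\<Phi> \<omega> \<partial>P) * \<infinity>"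
proof -
  note [measurable] = measurable_compose_split2[OF k[unfolded split_beta']]
  define L where "L = emeasure lborel (ball (0::'v) 1)"
  define J where "J \<omega> s = (\<integral>\<^sup>+x. indicator (ball 0 1) (x - s) * k \<omega> x \<partial>\<Phi> \<omega>)" for \<omega> s
  have J: "(\<lambda>p. J (fst p) (snd p)) \<in> borel_measurable (P \<Otimes>\<^sub>M lborel)"
    unfolding J_def by (rule measurable_nn_integral_random_measure[where h=fst]) measurable
  have Z: "(\<lambda>\<omega>. \<integral>\<^sup>+x. k \<omega> x \<partial>\<Phi> \<omega>) \<in> borel_measurable P"
    using measurable_nn_integral_weighted[of "\<lambda>_. 1"] by simp
  have "L * (\<integral>\<^sup>+x. k \<omega> x \<partial>\<Phi> \<omega>) = (\<integral>\<^sup>+s. J \<omega> s \<partial>lborel)" if \<omega>: "\<omega> \<in> space P" for \<omega>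
    unfolding L_def J_def using \<omega>
    by (intro nn_integral_unit_ball_translates sigma_finite_random_measure sets_random_measure) measurable
  then have "L * (\<integral>\<^sup>+\<omega>. \<integral>\<^sup>+x. k \<omega> x \<partial>\<Phi> \<omega> \<partial>P) = (\<integral>\<^sup>+\<omega>. \<integral>\<^sup>+s. J \<omega> s \<partial>lborel \<partial>P)"
    using Z by (simp add: nn_integral_cmult[symmetric] cong: nn_integral_cong)
  also have "\<dots> = (\<integral>\<^sup>+s. \<integral>\<^sup>+\<omega>. J \<omega> s \<partial>P \<partial>lborel)"
    using J prob_space_imp_sigma_finite[OF prob_space]
    by (intro Tonelli[symmetric] sigma_finite_lborel) (simp_all add: split_beta')
  also have "\<dots> = (\<integral>\<^sup>+s. (\<integral>\<^sup>+\<omega>. \<integral>\<^sup>+x. indicator (ball 0 1) x * k \<omega> x \<partial>\<Phi> \<omega> \<partial>P) \<partial>lborel)"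
    unfolding J_def by (simp add: expectation_random_measure_shift)
  finally show ?thesis
    by (simp add: L_def emeasure_lborel_UNIV)
qed

lemma random_measure_zero_or_infinity:
  assumes ergodic
  defines "c \<equiv> \<integral>\<^sup>+\<omega>. \<integral>\<^sup>+x. indicator (ball 0 1) x * k \<omega> x \<partial>\<Phi> \<omega> \<partial>P"
  shows "c = 0 \<Longrightarrow> AE \<omega> in P. (\<integral>\<^sup>+x. k \<omega> x \<partial>\<Phi> \<omega>) = 0"
    and "c \<noteq> 0 \<Longrightarrow> AE \<omega> in P. (\<integral>\<^sup>+x. k \<omega> x \<partial>\<Phi> \<omega>) = \<infinity>"
proof -
  have Z: "(\<lambda>\<omega>. \<integral>\<^sup>+x. k \<omega> x \<partial>\<Phi> \<omega>) \<in> borel_measurable P"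
    using measurable_nn_integral_weighted[of "\<lambda>_. 1"] by simp
  have L: "emeasure lborel (ball (0::'v) 1) \<noteq> 0" "emeasure lborel (ball (0::'v) 1) < \<infinity>"
    using emeasure_lborel_unit_ball[where 'v='v] by auto
  show "AE \<omega> in P. (\<integral>\<^sup>+x. k \<omega> x \<partial>\<Phi> \<omega>) = 0" if "c = 0"
    using expectation_random_measure_Campbell L that Z by (simp add: c_def nn_integral_0_iff_AE)
  show "AE \<omega> in P. (\<integral>\<^sup>+x. k \<omega> x \<partial>\<Phi> \<omega>) = \<infinity>" if "c \<noteq> 0"
  proof (rule AE_infinite_if_invariant[OF \<open>ergodic\<close> Z])
    show "(\<integral>\<^sup>+x. k (\<theta> s \<omega>) x \<partial>\<Phi> (\<theta> s \<omega>)) = (\<integral>\<^sup>+x. k \<omega> x \<partial>\<Phi> \<omega>)" if "\<omega> \<in> space P" for s \<omega>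
      using nn_integral_random_measure_adapted_flow[OF that, of "\<lambda>_. 1"] by simp
    show "(\<integral>\<^sup>+\<omega>. \<integral>\<^sup>+x. k \<omega> x \<partial>\<Phi> \<omega> \<partial>P) = \<infinity>"
      using expectation_random_measure_Campbell L that
      by (auto simp: c_def ennreal_mult_eq_top_iff)
  qed
qed

end

end

context
  fixes h :: "'w \<Rightarrow> 'v \<Rightarrow> ennreal"
  assumes h: "(\<lambda>(\<omega>, x). h \<omega> x) \<in> borel_measurable (P \<Otimes>\<^sub>M borel)"
    and h_le_1: "AE \<omega> in P. \<forall>x. h \<omega> x \<le> 1"
begin

lemma expectation_local_balance:
  assumes "has_intensity P \<Phi> l"
  shows "(\<integral>\<^sup>+\<omega>. \<integral>\<^sup>+x. indicator (ball 0 1) x * (1 - h \<omega> x) \<partial>\<Phi> \<omega> \<partial>P)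
       + (\<integral>\<^sup>+\<omega>. \<integral>\<^sup>+x. indicator (ball 0 1) x * h \<omega> x \<partial>\<Phi> \<omega> \<partial>P)
       = ennreal l * emeasure lborel (ball (0::'v) 1)"
proof -
  note [measurable] = measurable_compose_split2[OF h[unfolded split_beta']]
  have "(\<integral>\<^sup>+\<omega>. \<integral>\<^sup>+x. indicator (ball 0 1) x * (1 - h \<omega> x) \<partial>\<Phi> \<omega> \<partial>P)
       + (\<integral>\<^sup>+\<omega>. \<integral>\<^sup>+x. indicator (ball 0 1) x * h \<omega> x \<partial>\<Phi> \<omega> \<partial>P)
     = (\<integral>\<^sup>+\<omega>. (\<integral>\<^sup>+x. indicator (ball 0 1) x * (1 - h \<omega> x) \<partial>\<Phi> \<omega>)
         + (\<integral>\<^sup>+x. indicator (ball 0 1) x * h \<omega> x \<partial>\<Phi> \<omega>) \<partial>P)"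
    by (intro nn_integral_add[symmetric];
        rule measurable_nn_integral_random_measure[OF measurable_ident_sets[OF refl]]) measurable
  also have "\<dots> = (\<integral>\<^sup>+\<omega>. emeasure (\<Phi> \<omega>) (ball 0 1) \<partial>P)"
  proof (rule nn_integral_cong_AE)
    show "AE \<omega> in P. (\<integral>\<^sup>+x. indicator (ball 0 1) x * (1 - h \<omega> x) \<partial>\<Phi> \<omega>)
        + (\<integral>\<^sup>+x. indicator (ball 0 1) x * h \<omega> x \<partial>\<Phi> \<omega>) = emeasure (\<Phi> \<omega>) (ball 0 1)"
      using h_le_1
    proof (rule AE_mp[OF _ AE_I2], intro impI)
      fix \<omega> assume \<omega>: "\<omega> \<in> space P" and le_1: "\<forall>x. h \<omega> x \<le> 1"
      note [measurable_cong] = sets_random_measure[OF \<omega>]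
      have "(\<integral>\<^sup>+x. indicator (ball 0 1) x * (1 - h \<omega> x) \<partial>\<Phi> \<omega>) + (\<integral>\<^sup>+x. indicator (ball 0 1) x * h \<omega> x \<partial>\<Phi> \<omega>)
          = (\<integral>\<^sup>+x. indicator (ball 0 1) x \<partial>\<Phi> \<omega>)"
        using \<omega> le_1
        by (subst nn_integral_add[symmetric])
          (auto simp: diff_add_cancel_ennreal simp flip: distrib_left intro!: nn_integral_cong)
      then show "(\<integral>\<^sup>+x. indicator (ball 0 1) x * (1 - h \<omega> x) \<partial>\<Phi> \<omega>)
          + (\<integral>\<^sup>+x. indicator (ball 0 1) x * h \<omega> x \<partial>\<Phi> \<omega>) = emeasure (\<Phi> \<omega>) (ball 0 1)"
        using \<omega> by (simp add: sets_random_measure)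
    qed
  qed
  also have "\<dots> = ennreal l * emeasure lborel (ball (0::'v) 1)"
    using assms by (simp add: has_intensity_def)
  finally show ?thesis .
qed

lemma deficit_zero_or_infinity:
  assumes h_adapted: "\<And>s \<omega> x. \<omega> \<in> space P \<Longrightarrow> h (\<theta> s \<omega>) x = h \<omega> (x + s)"
    and ergodic
  defines "d \<equiv> \<integral>\<^sup>+\<omega>. \<integral>\<^sup>+x. indicator (ball 0 1) x * (1 - h \<omega> x) \<partial>\<Phi> \<omega> \<partial>P"
  shows "d = 0 \<Longrightarrow> AE \<omega> in P. AE x in \<Phi> \<omega>. h \<omega> x = 1"
    and "d \<noteq> 0 \<Longrightarrow> AE \<omega> in P. {x \<in> supp (\<Phi> \<omega>). h \<omega> x \<noteq> 1} \<in> sets (\<Phi> \<omega>)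
      \<and> emeasure (\<Phi> \<omega>) {x \<in> supp (\<Phi> \<omega>). h \<omega> x \<noteq> 1} = \<infinity>"
proof -
  note [measurable] = measurable_compose_split2[OF h[unfolded split_beta']]
  have deficit: "(\<lambda>(\<omega>, x). 1 - h \<omega> x) \<in> borel_measurable (P \<Otimes>\<^sub>M borel)"
    by measurable
  have h_\<omega>: "h \<omega> \<in> borel_measurable borel" if "\<omega> \<in> space P" for \<omega>
    using that by measurable
  note law = random_measure_zero_or_infinity[where k="\<lambda>\<omega> x. 1 - h \<omega> x", OF deficit _ \<open>ergodic\<close>]
  have law_0: "AE \<omega> in P. (\<integral>\<^sup>+x. 1 - h \<omega> x \<partial>\<Phi> \<omega>) = 0" if "d = 0"
    using law(1) that by (simp add: h_adapted d_def)
  have law_inf: "AE \<omega> in P. (\<integral>\<^sup>+x. 1 - h \<omega> x \<partial>\<Phi> \<omega>) = \<infinity>" if "d \<noteq> 0"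
    using law(2) that by (simp add: h_adapted d_def)
  show "AE \<omega> in P. AE x in \<Phi> \<omega>. h \<omega> x = 1" if "d = 0"
    using law_0[OF that] h_le_1 AE_space
  proof eventually_elim
    case (elim \<omega>)
    then show ?case
      by (intro AE_eq_1_if_nn_integral_one_minus_eq_0)
        (auto simp: measurable_cong_sets[OF sets_random_measure refl] h_\<omega>)
  qed
  show "AE \<omega> in P. {x \<in> supp (\<Phi> \<omega>). h \<omega> x \<noteq> 1} \<in> sets (\<Phi> \<omega>)
      \<and> emeasure (\<Phi> \<omega>) {x \<in> supp (\<Phi> \<omega>). h \<omega> x \<noteq> 1} = \<infinity>" if "d \<noteq> 0"
    using law_inf[OF that] AE_space
  proof eventually_elim
    case (elim \<omega>)
    then show ?case
      using emeasure_supp_ne_1_eq_infinity[OF sets_random_measure h_\<omega>] by auto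
  qed
qed

end

end

lemma measurable_double_nn_integral_random_measure:
  assumes \<Phi>: "adapted_random_measure \<Phi>" and \<Psi>: "adapted_random_measure \<Psi>"
    and h[measurable]: "h \<in> measurable N P"
    and g: "(\<lambda>(a, x, \<xi>). g a x \<xi>) \<in> borel_measurable (N \<Otimes>\<^sub>M borel \<Otimes>\<^sub>M borel)"
  shows "(\<lambda>a. \<integral>\<^sup>+x. \<integral>\<^sup>+\<xi>. g a x \<xi> \<partial>\<Psi> (h a) \<partial>\<Phi> (h a)) \<in> borel_measurable N"
proof -
  note [measurable] = measurable_compose_split3[OF g[unfolded split_beta']]
  have "(\<lambda>p. \<integral>\<^sup>+\<xi>. g (fst p) (snd p) \<xi> \<partial>\<Psi> (h (fst p))) \<in> borel_measurable (N \<Otimes>\<^sub>M borel)"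
    by (rule measurable_nn_integral_random_measure[OF \<Psi>]) measurable
  note [measurable] = measurable_compose_split2[OF this]
  show ?thesis
    by (rule measurable_nn_integral_random_measure[OF \<Phi> h]) measurable
qed

context
  fixes \<Phi> \<Psi> :: "'w \<Rightarrow> 'v measure" and G :: "'w \<Rightarrow> 'v \<Rightarrow> 'v \<Rightarrow> ennreal"
  assumes \<Phi>: "adapted_random_measure \<Phi>" and \<Psi>: "adapted_random_measure \<Psi>"
    and G: "(\<lambda>(\<omega>, x, \<xi>). G \<omega> x \<xi>) \<in> borel_measurable (P \<Otimes>\<^sub>M borel \<Otimes>\<^sub>M borel)"
begin

lemma measurable_double_nn_integral_parametric:
  assumes u: "(\<lambda>(s, x, \<xi>). u s x \<xi>) \<in> borel_measurable (borel \<Otimes>\<^sub>M borel \<Otimes>\<^sub>M borel)"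
  shows "(\<lambda>p. \<integral>\<^sup>+x. \<integral>\<^sup>+\<xi>. u (snd p) x \<xi> * G (fst p) x \<xi> \<partial>\<Psi> (fst p) \<partial>\<Phi> (fst p))
    \<in> borel_measurable (P \<Otimes>\<^sub>M lborel)"
proof -
  note [measurable] = measurable_compose_split3[OF G[unfolded split_beta']]
    measurable_compose_split3[OF u[unfolded split_beta']]
  show ?thesis
    by (rule measurable_double_nn_integral_random_measure[OF \<Phi> \<Psi>]) measurable
qed

lemma nn_integral_lborel_double_nn_integral:
  assumes \<omega>: "\<omega> \<in> space P"
    and u: "(\<lambda>(s, x, \<xi>). u s x \<xi>) \<in> borel_measurable (borel \<Otimes>\<^sub>M borel \<Otimes>\<^sub>M borel)"
  shows "(\<integral>\<^sup>+s. \<integral>\<^sup>+x. \<integral>\<^sup>+\<xi>. u s x \<xi> * G \<omega> x \<xi> \<partial>\<Psi> \<omega> \<partial>\<Phi> \<omega> \<partial>lborel)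
       = (\<integral>\<^sup>+x. \<integral>\<^sup>+\<xi>. (\<integral>\<^sup>+s. u s x \<xi> \<partial>lborel) * G \<omega> x \<xi> \<partial>\<Psi> \<omega> \<partial>\<Phi> \<omega>)"
proof -
  note [measurable] = measurable_compose_split3[OF G[unfolded split_beta']]
    measurable_compose_split3[OF u[unfolded split_beta']]
  note [measurable_cong] = sets_random_measure[OF \<Phi> \<omega>] sets_random_measure[OF \<Psi> \<omega>]
  have "(\<lambda>p. \<integral>\<^sup>+\<xi>. u (snd p) (fst p) \<xi> * G \<omega> (fst p) \<xi> \<partial>\<Psi> \<omega>) \<in> borel_measurable (borel \<Otimes>\<^sub>M lborel)"
    by (rule measurable_nn_integral_random_measure[OF \<Psi>, where h="\<lambda>_. \<omega>"]) (use \<omega> in measurable)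
  then have "(\<integral>\<^sup>+s. \<integral>\<^sup>+x. \<integral>\<^sup>+\<xi>. u s x \<xi> * G \<omega> x \<xi> \<partial>\<Psi> \<omega> \<partial>\<Phi> \<omega> \<partial>lborel)
      = (\<integral>\<^sup>+x. \<integral>\<^sup>+s. \<integral>\<^sup>+\<xi>. u s x \<xi> * G \<omega> x \<xi> \<partial>\<Psi> \<omega> \<partial>lborel \<partial>\<Phi> \<omega>)"
    using \<omega> by (intro Tonelli sigma_finite_random_measure[OF \<Phi>] sigma_finite_lborel) (simp_all add: split_beta')
  also have "\<dots> = (\<integral>\<^sup>+x. \<integral>\<^sup>+\<xi>. \<integral>\<^sup>+s. u s x \<xi> * G \<omega> x \<xi> \<partial>lborel \<partial>\<Psi> \<omega> \<partial>\<Phi> \<omega>)"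
    using \<omega> by (intro nn_integral_cong Tonelli sigma_finite_random_measure[OF \<Psi>] sigma_finite_lborel) measurable
  also have "\<dots> = (\<integral>\<^sup>+x. \<integral>\<^sup>+\<xi>. (\<integral>\<^sup>+s. u s x \<xi> \<partial>lborel) * G \<omega> x \<xi> \<partial>\<Psi> \<omega> \<partial>\<Phi> \<omega>)"
    by (intro nn_integral_cong nn_integral_multc) measurable
  finally show ?thesis .
qed

lemma measurable_nn_integral_right:
  "(\<lambda>(\<omega>, x). \<integral>\<^sup>+\<xi>. G \<omega> x \<xi> \<partial>\<Psi> \<omega>) \<in> borel_measurable (P \<Otimes>\<^sub>M borel)"
proof -
  note [measurable] = measurable_compose_split3[OF G[unfolded split_beta']]
  have "(\<lambda>p. \<integral>\<^sup>+\<xi>. G (fst p) (snd p) \<xi> \<partial>\<Psi> (fst p)) \<in> borel_measurable (P \<Otimes>\<^sub>M borel)"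
    by (rule measurable_nn_integral_random_measure[OF \<Psi>]) measurable
  then show ?thesis
    by (simp add: split_beta')
qed

lemma measurable_nn_integral_left:
  "(\<lambda>(\<omega>, \<xi>). \<integral>\<^sup>+x. G \<omega> x \<xi> \<partial>\<Phi> \<omega>) \<in> borel_measurable (P \<Otimes>\<^sub>M borel)"
proof -
  note [measurable] = measurable_compose_split3[OF G[unfolded split_beta']]
  have "(\<lambda>p. \<integral>\<^sup>+x. G (fst p) x (snd p) \<partial>\<Phi> (fst p)) \<in> borel_measurable (P \<Otimes>\<^sub>M borel)"
    by (rule measurable_nn_integral_random_measure[OF \<Phi>]) measurable
  then show ?thesis
    by (simp add: split_beta')
qed

lemma expectation_lborel_double_nn_integral:
  assumes u: "(\<lambda>(s, x, \<xi>). u s x \<xi>) \<in> borel_measurable (borel \<Otimes>\<^sub>M borel \<Otimes>\<^sub>M borel)"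
  shows "(\<integral>\<^sup>+s. (\<integral>\<^sup>+\<omega>. \<integral>\<^sup>+x. \<integral>\<^sup>+\<xi>. u s x \<xi> * G \<omega> x \<xi> \<partial>\<Psi> \<omega> \<partial>\<Phi> \<omega> \<partial>P) \<partial>lborel)
       = (\<integral>\<^sup>+\<omega>. \<integral>\<^sup>+x. \<integral>\<^sup>+\<xi>. (\<integral>\<^sup>+s. u s x \<xi> \<partial>lborel) * G \<omega> x \<xi> \<partial>\<Psi> \<omega> \<partial>\<Phi> \<omega> \<partial>P)"
  using measurable_double_nn_integral_parametric[OF u] prob_space_imp_sigma_finite[OF prob_space]
  by (subst Tonelli) (simp_all add: split_beta' sigma_finite_lborel
      nn_integral_lborel_double_nn_integral[OF _ u] cong: nn_integral_cong)

lemma expectation_nn_integral_right: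
  assumes [measurable]: "w \<in> borel_measurable borel"
  shows "c * (\<integral>\<^sup>+\<omega>. \<integral>\<^sup>+x. w x * (\<integral>\<^sup>+\<xi>. G \<omega> x \<xi> \<partial>\<Psi> \<omega>) \<partial>\<Phi> \<omega> \<partial>P)
       = (\<integral>\<^sup>+\<omega>. \<integral>\<^sup>+x. \<integral>\<^sup>+\<xi>. c * w x * G \<omega> x \<xi> \<partial>\<Psi> \<omega> \<partial>\<Phi> \<omega> \<partial>P)"
proof -
  note [measurable] = measurable_compose_split3[OF G[unfolded split_beta']]
    measurable_compose_split2[OF measurable_nn_integral_right[unfolded split_beta']]
  have "c * (\<integral>\<^sup>+x. w x * (\<integral>\<^sup>+\<xi>. G \<omega> x \<xi> \<partial>\<Psi> \<omega>) \<partial>\<Phi> \<omega>)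
      = (\<integral>\<^sup>+x. \<integral>\<^sup>+\<xi>. c * w x * G \<omega> x \<xi> \<partial>\<Psi> \<omega> \<partial>\<Phi> \<omega>)" if \<omega>: "\<omega> \<in> space P" for \<omega>
  proof -
    note [measurable_cong] = sets_random_measure[OF \<Phi> \<omega>] sets_random_measure[OF \<Psi> \<omega>]
    have "c * (\<integral>\<^sup>+x. w x * (\<integral>\<^sup>+\<xi>. G \<omega> x \<xi> \<partial>\<Psi> \<omega>) \<partial>\<Phi> \<omega>)
        = (\<integral>\<^sup>+x. c * w x * (\<integral>\<^sup>+\<xi>. G \<omega> x \<xi> \<partial>\<Psi> \<omega>) \<partial>\<Phi> \<omega>)"
      unfolding mult.assoc using \<omega> by (intro nn_integral_cmult[symmetric]) measurable
    also have "\<dots> = (\<integral>\<^sup>+x. \<integral>\<^sup>+\<xi>. c * w x * G \<omega> x \<xi> \<partial>\<Psi> \<omega> \<partial>\<Phi> \<omega>)"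
      using \<omega> by (intro nn_integral_cong nn_integral_cmult[symmetric]) measurable
    finally show ?thesis .
  qed
  moreover have "(\<lambda>\<omega>. \<integral>\<^sup>+x. w x * (\<integral>\<^sup>+\<xi>. G \<omega> x \<xi> \<partial>\<Psi> \<omega>) \<partial>\<Phi> \<omega>) \<in> borel_measurable P"
    by (rule measurable_nn_integral_random_measure[OF \<Phi> measurable_ident_sets[OF refl]]) measurable
  ultimately show ?thesis
    by (simp add: nn_integral_cmult[symmetric] cong: nn_integral_cong)
qed

lemma expectation_nn_integral_left:
  assumes [measurable]: "w \<in> borel_measurable borel"
  shows "c * (\<integral>\<^sup>+\<omega>. \<integral>\<^sup>+\<xi>. w \<xi> * (\<integral>\<^sup>+x. G \<omega> x \<xi> \<partial>\<Phi> \<omega>) \<partial>\<Psi> \<omega> \<partial>P)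
       = (\<integral>\<^sup>+\<omega>. \<integral>\<^sup>+x. \<integral>\<^sup>+\<xi>. c * w \<xi> * G \<omega> x \<xi> \<partial>\<Psi> \<omega> \<partial>\<Phi> \<omega> \<partial>P)"
proof -
  note [measurable] = measurable_compose_split3[OF G[unfolded split_beta']]
    measurable_compose_split2[OF measurable_nn_integral_left[unfolded split_beta']]
  have "c * (\<integral>\<^sup>+\<xi>. w \<xi> * (\<integral>\<^sup>+x. G \<omega> x \<xi> \<partial>\<Phi> \<omega>) \<partial>\<Psi> \<omega>)
      = (\<integral>\<^sup>+x. \<integral>\<^sup>+\<xi>. c * w \<xi> * G \<omega> x \<xi> \<partial>\<Psi> \<omega> \<partial>\<Phi> \<omega>)" if \<omega>: "\<omega> \<in> space P" for \<omega>
  proof -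
    note [measurable_cong] = sets_random_measure[OF \<Phi> \<omega>] sets_random_measure[OF \<Psi> \<omega>]
    have "c * (\<integral>\<^sup>+\<xi>. w \<xi> * (\<integral>\<^sup>+x. G \<omega> x \<xi> \<partial>\<Phi> \<omega>) \<partial>\<Psi> \<omega>)
        = (\<integral>\<^sup>+\<xi>. c * w \<xi> * (\<integral>\<^sup>+x. G \<omega> x \<xi> \<partial>\<Phi> \<omega>) \<partial>\<Psi> \<omega>)"
      unfolding mult.assoc using \<omega> by (intro nn_integral_cmult[symmetric]) measurable
    also have "\<dots> = (\<integral>\<^sup>+\<xi>. \<integral>\<^sup>+x. c * w \<xi> * G \<omega> x \<xi> \<partial>\<Phi> \<omega> \<partial>\<Psi> \<omega>)"
      using \<omega> by (intro nn_integral_cong nn_integral_cmult[symmetric]) measurable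
    also have "\<dots> = (\<integral>\<^sup>+x. \<integral>\<^sup>+\<xi>. c * w \<xi> * G \<omega> x \<xi> \<partial>\<Psi> \<omega> \<partial>\<Phi> \<omega>)"
      using \<omega> by (intro Tonelli sigma_finite_random_measure[OF \<Phi>] sigma_finite_random_measure[OF \<Psi>])
        measurable
    finally show ?thesis .
  qed
  moreover have "(\<lambda>\<omega>. \<integral>\<^sup>+\<xi>. w \<xi> * (\<integral>\<^sup>+x. G \<omega> x \<xi> \<partial>\<Phi> \<omega>) \<partial>\<Psi> \<omega>) \<in> borel_measurable P"
    by (rule measurable_nn_integral_random_measure[OF \<Psi> measurable_ident_sets[OF refl]]) measurable
  ultimately show ?thesis
    by (simp add: nn_integral_cmult[symmetric] cong: nn_integral_cong)
qed

context
  assumes G_adapted: "\<And>s \<omega> x \<xi>. \<omega> \<in> space P \<Longrightarrow> G (\<theta> s \<omega>) x \<xi> = G \<omega> (x + s) (\<xi> + s)"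
begin

lemma double_nn_integral_random_measure_flow:
  assumes \<omega>: "\<omega> \<in> space P" and u: "(\<lambda>(x, \<xi>). u x \<xi>) \<in> borel_measurable (borel \<Otimes>\<^sub>M borel)"
  shows "(\<integral>\<^sup>+x. \<integral>\<^sup>+\<xi>. u x \<xi> * G (\<theta> s \<omega>) x \<xi> \<partial>\<Psi> (\<theta> s \<omega>) \<partial>\<Phi> (\<theta> s \<omega>))
       = (\<integral>\<^sup>+x. \<integral>\<^sup>+\<xi>. u (x - s) (\<xi> - s) * G \<omega> x \<xi> \<partial>\<Psi> \<omega> \<partial>\<Phi> \<omega>)"
proof -
  note [measurable] = measurable_compose_split3[OF G[unfolded split_beta']]
    measurable_compose_split2[OF u[unfolded split_beta']]
  have [measurable]: "\<theta> s \<omega> \<in> space P"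
    using measurable_space[OF measurable_flow_map \<omega>] .
  have "(\<integral>\<^sup>+x. \<integral>\<^sup>+\<xi>. u x \<xi> * G (\<theta> s \<omega>) x \<xi> \<partial>\<Psi> (\<theta> s \<omega>) \<partial>\<Phi> (\<theta> s \<omega>))
      = (\<integral>\<^sup>+x. \<integral>\<^sup>+\<xi>. u (x - s) \<xi> * G (\<theta> s \<omega>) (x - s) \<xi> \<partial>\<Psi> (\<theta> s \<omega>) \<partial>\<Phi> \<omega>)"
    by (rule nn_integral_random_measure_flow[OF \<Phi> \<omega>],
        rule measurable_nn_integral_random_measure[OF \<Psi>, where h="\<lambda>_. \<theta> s \<omega>"]) measurable
  also have "\<dots> = (\<integral>\<^sup>+x. \<integral>\<^sup>+\<xi>. u (x - s) (\<xi> - s) * G (\<theta> s \<omega>) (x - s) (\<xi> - s) \<partial>\<Psi> \<omega> \<partial>\<Phi> \<omega>)"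
    by (intro nn_integral_cong nn_integral_random_measure_flow[OF \<Psi> \<omega>]) measurable
  finally show ?thesis
    using G_adapted[OF \<omega>] by simp
qed

lemma expectation_double_random_measure_shift:
  assumes u: "(\<lambda>(x, \<xi>). u x \<xi>) \<in> borel_measurable (borel \<Otimes>\<^sub>M borel)"
  shows "(\<integral>\<^sup>+\<omega>. \<integral>\<^sup>+x. \<integral>\<^sup>+\<xi>. u (x - s) (\<xi> - s) * G \<omega> x \<xi> \<partial>\<Psi> \<omega> \<partial>\<Phi> \<omega> \<partial>P)
       = (\<integral>\<^sup>+\<omega>. \<integral>\<^sup>+x. \<integral>\<^sup>+\<xi>. u x \<xi> * G \<omega> x \<xi> \<partial>\<Psi> \<omega> \<partial>\<Phi> \<omega> \<partial>P)"
proof -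
  note [measurable] = measurable_compose_split3[OF G[unfolded split_beta']]
    measurable_compose_split2[OF u[unfolded split_beta']]
  have "(\<lambda>\<omega>. \<integral>\<^sup>+x. \<integral>\<^sup>+\<xi>. u x \<xi> * G \<omega> x \<xi> \<partial>\<Psi> \<omega> \<partial>\<Phi> \<omega>) \<in> borel_measurable P"
    by (rule measurable_double_nn_integral_random_measure[OF \<Phi> \<Psi> measurable_ident_sets[OF refl]])
      measurable
  from nn_integral_flow_invariant[OF this, of s] show ?thesis
    using u by (simp add: double_nn_integral_random_measure_flow cong: nn_integral_cong)
qed

lemma nn_integral_right_flow:
  assumes \<omega>: "\<omega> \<in> space P"
  shows "(\<integral>\<^sup>+\<xi>. G (\<theta> s \<omega>) x \<xi> \<partial>\<Psi> (\<theta> s \<omega>)) = (\<integral>\<^sup>+\<xi>. G \<omega> (x + s) \<xi> \<partial>\<Psi> \<omega>)"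
proof -
  note [measurable] = measurable_compose_split3[OF G[unfolded split_beta']]
  have [measurable]: "\<theta> s \<omega> \<in> space P"
    using measurable_space[OF measurable_flow_map \<omega>] .
  have "(\<integral>\<^sup>+\<xi>. G (\<theta> s \<omega>) x \<xi> \<partial>\<Psi> (\<theta> s \<omega>)) = (\<integral>\<^sup>+\<xi>. G (\<theta> s \<omega>) x (\<xi> - s) \<partial>\<Psi> \<omega>)"
    by (rule nn_integral_random_measure_flow[OF \<Psi> \<omega>]) measurable
  then show ?thesis
    using G_adapted[OF \<omega>] by simp
qed

lemma nn_integral_left_flow:
  assumes \<omega>: "\<omega> \<in> space P"
  shows "(\<integral>\<^sup>+x. G (\<theta> s \<omega>) x \<xi> \<partial>\<Phi> (\<theta> s \<omega>)) = (\<integral>\<^sup>+x. G \<omega> x (\<xi> + s) \<partial>\<Phi> \<omega>)"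
proof -
  note [measurable] = measurable_compose_split3[OF G[unfolded split_beta']]
  have [measurable]: "\<theta> s \<omega> \<in> space P"
    using measurable_space[OF measurable_flow_map \<omega>] .
  have "(\<integral>\<^sup>+x. G (\<theta> s \<omega>) x \<xi> \<partial>\<Phi> (\<theta> s \<omega>)) = (\<integral>\<^sup>+x. G (\<theta> s \<omega>) (x - s) \<xi> \<partial>\<Phi> \<omega>)"
    by (rule nn_integral_random_measure_flow[OF \<Phi> \<omega>]) measurable
  then show ?thesis
    using G_adapted[OF \<omega>] by simp
qed

theorem mass_transport:
  "(\<integral>\<^sup>+\<omega>. \<integral>\<^sup>+x. indicator (ball 0 1) x * (\<integral>\<^sup>+\<xi>. G \<omega> x \<xi> \<partial>\<Psi> \<omega>) \<partial>\<Phi> \<omega> \<partial>P)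
     = (\<integral>\<^sup>+\<omega>. \<integral>\<^sup>+\<xi>. indicator (ball 0 1) \<xi> * (\<integral>\<^sup>+x. G \<omega> x \<xi> \<partial>\<Phi> \<omega>) \<partial>\<Psi> \<omega> \<partial>P)"
  (is "?sites = ?centers")
proof -
  define B where "B = ball (0::'v) 1"
  define L where "L = emeasure lborel B"
  have [measurable]: "B \<in> sets borel"
    by (simp add: B_def)
  \<comment> \<open>Spread the indicator of the center over all its translates; stationarity then moves the
    translation from the center to the site.\<close>
  have "L * ?sites = (\<integral>\<^sup>+\<omega>. \<integral>\<^sup>+x. \<integral>\<^sup>+\<xi>. L * indicator B x * G \<omega> x \<xi> \<partial>\<Psi> \<omega> \<partial>\<Phi> \<omega> \<partial>P)"
    unfolding B_def by (rule expectation_nn_integral_right) simp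
  also have "\<dots> = (\<integral>\<^sup>+\<omega>. \<integral>\<^sup>+x. \<integral>\<^sup>+\<xi>.
      (\<integral>\<^sup>+s. indicator B x * indicator B (\<xi> + s) \<partial>lborel) * G \<omega> x \<xi> \<partial>\<Psi> \<omega> \<partial>\<Phi> \<omega> \<partial>P)"
    by (simp add: L_def B_def nn_integral_cmult nn_integral_indicator_ball_add mult.commute)
  also have "\<dots> = (\<integral>\<^sup>+s. (\<integral>\<^sup>+\<omega>. \<integral>\<^sup>+x. \<integral>\<^sup>+\<xi>.
      indicator B x * indicator B (\<xi> + s) * G \<omega> x \<xi> \<partial>\<Psi> \<omega> \<partial>\<Phi> \<omega> \<partial>P) \<partial>lborel)"
    by (rule expectation_lborel_double_nn_integral[symmetric]) measurable
  also have "\<dots> = (\<integral>\<^sup>+s. (\<integral>\<^sup>+\<omega>. \<integral>\<^sup>+x. \<integral>\<^sup>+\<xi>.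
      indicator B (x - s) * indicator B \<xi> * G \<omega> x \<xi> \<partial>\<Psi> \<omega> \<partial>\<Phi> \<omega> \<partial>P) \<partial>lborel)"
    using expectation_double_random_measure_shift[of "\<lambda>x \<xi>. indicator B x * indicator B (\<xi> + s)" s for s]
    by (simp add: split_beta')
  also have "\<dots> = (\<integral>\<^sup>+\<omega>. \<integral>\<^sup>+x. \<integral>\<^sup>+\<xi>.
      (\<integral>\<^sup>+s. indicator B (x - s) * indicator B \<xi> \<partial>lborel) * G \<omega> x \<xi> \<partial>\<Psi> \<omega> \<partial>\<Phi> \<omega> \<partial>P)"
    by (rule expectation_lborel_double_nn_integral) measurable
  also have "\<dots> = (\<integral>\<^sup>+\<omega>. \<integral>\<^sup>+x. \<integral>\<^sup>+\<xi>. L * indicator B \<xi> * G \<omega> x \<xi> \<partial>\<Psi> \<omega> \<partial>\<Phi> \<omega> \<partial>P)"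
    by (simp add: L_def B_def nn_integral_multc nn_integral_indicator_ball_diff)
  also have "\<dots> = L * ?centers"
    unfolding B_def by (rule expectation_nn_integral_left[symmetric]) simp
  finally show ?thesis
    using emeasure_lborel_unit_ball[where 'v='v] by (auto simp: L_def B_def ennreal_mult_cancel_left)
qed

end

end

end

locale stable_density_field = stationary_flow P \<theta>
  for P :: "'w measure" and \<theta> :: "'v::euclidean_space \<Rightarrow> 'w \<Rightarrow> 'w" +
  fixes \<Phi> \<Psi> :: "'w \<Rightarrow> 'v measure" and F :: "'w \<Rightarrow> 'v \<Rightarrow> 'v \<Rightarrow> real"
  assumes ergodic: ergodic
    and \<Phi>: "adapted_random_measure \<Phi>" and \<Psi>: "adapted_random_measure \<Psi>"
    and F: "(\<lambda>(\<omega>, x, y). F \<omega> x y) \<in> borel_measurable (P \<Otimes>\<^sub>M lborel \<Otimes>\<^sub>M lborel)"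
    and F_adapted: "flow_adapted_fun P \<theta> F"
    and AE_stable: "AE \<omega> in P. constrained_density (\<Phi> \<omega>) (\<Psi> \<omega>) (F \<omega>) \<and> stable (\<Phi> \<omega>) (\<Psi> \<omega>) (F \<omega>)"
begin

definition site_load :: "'w \<Rightarrow> 'v \<Rightarrow> ennreal" where
  "site_load \<omega> x = (\<integral>\<^sup>+\<xi>. ennreal (F \<omega> x \<xi>) \<partial>\<Psi> \<omega>)"

definition center_load :: "'w \<Rightarrow> 'v \<Rightarrow> ennreal" where
  "center_load \<omega> \<xi> = (\<integral>\<^sup>+x. ennreal (F \<omega> x \<xi>) \<partial>\<Phi> \<omega>)"

definition site_deficit :: ennreal where
  "site_deficit = (\<integral>\<^sup>+\<omega>. \<integral>\<^sup>+x. indicator (ball 0 1) x * (1 - site_load \<omega> x) \<partial>\<Phi> \<omega> \<partial>P)"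

definition center_deficit :: ennreal where
  "center_deficit = (\<integral>\<^sup>+\<omega>. \<integral>\<^sup>+\<xi>. indicator (ball 0 1) \<xi> * (1 - center_load \<omega> \<xi>) \<partial>\<Psi> \<omega> \<partial>P)"

lemma exhausted_iff_site_load: "exhausted (\<Psi> \<omega>) (F \<omega>) x \<longleftrightarrow> site_load \<omega> x = 1"
  by (simp add: exhausted_def site_load_def)

lemma sated_iff_center_load: "sated (\<Phi> \<omega>) (F \<omega>) \<xi> \<longleftrightarrow> center_load \<omega> \<xi> = 1"
  by (simp add: sated_def center_load_def)

lemma measurable_F_ennreal:
  "(\<lambda>(\<omega>, x, y). ennreal (F \<omega> x y)) \<in> borel_measurable (P \<Otimes>\<^sub>M borel \<Otimes>\<^sub>M borel)"
proof -
  have "(\<lambda>(\<omega>, x, y). F \<omega> x y) \<in> borel_measurable (P \<Otimes>\<^sub>M borel \<Otimes>\<^sub>M borel)"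
    using F by (simp add: measurable_cong_sets[OF sets_pair_measure_cong[OF refl
          sets_pair_measure_cong[OF sets_lborel sets_lborel]] refl])
  note [measurable] = measurable_compose_split3[OF this[unfolded split_beta']]
  show ?thesis
    by measurable
qed

lemma F_ennreal_adapted: "\<omega> \<in> space P \<Longrightarrow> ennreal (F (\<theta> s \<omega>) x y) = ennreal (F \<omega> (x + s) (y + s))"
  using F_adapted by (simp add: flow_adapted_fun_def)

lemma measurable_site_load: "(\<lambda>(\<omega>, x). site_load \<omega> x) \<in> borel_measurable (P \<Otimes>\<^sub>M borel)"
  unfolding site_load_def by (rule measurable_nn_integral_right[OF \<Phi> \<Psi> measurable_F_ennreal])

lemma measurable_center_load: "(\<lambda>(\<omega>, \<xi>). center_load \<omega> \<xi>) \<in> borel_measurable (P \<Otimes>\<^sub>M borel)"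
  unfolding center_load_def by (rule measurable_nn_integral_left[OF \<Phi> \<Psi> measurable_F_ennreal])

lemma site_load_flow: "\<omega> \<in> space P \<Longrightarrow> site_load (\<theta> s \<omega>) x = site_load \<omega> (x + s)"
  unfolding site_load_def by (rule nn_integral_right_flow[OF \<Phi> \<Psi> measurable_F_ennreal F_ennreal_adapted])

lemma center_load_flow: "\<omega> \<in> space P \<Longrightarrow> center_load (\<theta> s \<omega>) \<xi> = center_load \<omega> (\<xi> + s)"
  unfolding center_load_def by (rule nn_integral_left_flow[OF \<Phi> \<Psi> measurable_F_ennreal F_ennreal_adapted])

lemma AE_site_load_le_1: "AE \<omega> in P. \<forall>x. site_load \<omega> x \<le> 1"
  using AE_stable by eventually_elim (simp add: constrained_density_def site_load_def)

lemma AE_center_load_le_1: "AE \<omega> in P. \<forall>\<xi>. center_load \<omega> \<xi> \<le> 1"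
  using AE_stable by eventually_elim (simp add: constrained_density_def center_load_def)

lemma deficit_balance:
  assumes "has_intensity P \<Phi> l\<Phi>" and "has_intensity P \<Psi> l\<Psi>"
  shows "site_deficit + ennreal l\<Psi> * emeasure lborel (ball (0::'v) 1)
       = center_deficit + ennreal l\<Phi> * emeasure lborel (ball (0::'v) 1)"
proof -
  define m where "m = (\<integral>\<^sup>+\<omega>. \<integral>\<^sup>+x. indicator (ball 0 1) x * site_load \<omega> x \<partial>\<Phi> \<omega> \<partial>P)"
  have m_centers: "m = (\<integral>\<^sup>+\<omega>. \<integral>\<^sup>+\<xi>. indicator (ball 0 1) \<xi> * center_load \<omega> \<xi> \<partial>\<Psi> \<omega> \<partial>P)"
    unfolding m_def site_load_def center_load_def
    by (rule mass_transport[OF \<Phi> \<Psi> measurable_F_ennreal F_ennreal_adapted])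
  have "site_deficit + m = ennreal l\<Phi> * emeasure lborel (ball (0::'v) 1)"
    unfolding site_deficit_def m_def
    by (rule expectation_local_balance[OF \<Phi> measurable_site_load AE_site_load_le_1 assms(1)])
  moreover have "center_deficit + m = ennreal l\<Psi> * emeasure lborel (ball (0::'v) 1)"
    unfolding center_deficit_def m_centers
    by (rule expectation_local_balance[OF \<Psi> measurable_center_load AE_center_load_le_1 assms(2)])
  ultimately show ?thesis
    by (metis add.assoc add.commute)
qed

lemma AE_exhausted_if_site_deficit_eq_0:
  "site_deficit = 0 \<Longrightarrow> AE \<omega> in P. AE x in \<Phi> \<omega>. exhausted (\<Psi> \<omega>) (F \<omega>) x"
  using deficit_zero_or_infinity(1)[OF \<Phi> measurable_site_load AE_site_load_le_1 site_load_flow ergodic]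
  by (simp add: site_deficit_def exhausted_iff_site_load)

lemma AE_sated_if_center_deficit_eq_0:
  "center_deficit = 0 \<Longrightarrow> AE \<omega> in P. AE \<xi> in \<Psi> \<omega>. sated (\<Phi> \<omega>) (F \<omega>) \<xi>"
  using deficit_zero_or_infinity(1)[OF \<Psi> measurable_center_load AE_center_load_le_1 center_load_flow ergodic]
  by (simp add: center_deficit_def sated_iff_center_load)

lemma AE_unexhausted_infinite_if_site_deficit_ne_0:
  assumes "site_deficit \<noteq> 0"
  shows "AE \<omega> in P. (\<forall>\<xi>\<in>supp (\<Psi> \<omega>). sated (\<Phi> \<omega>) (F \<omega>) \<xi>)
    \<and> {x \<in> supp (\<Phi> \<omega>). \<not> exhausted (\<Psi> \<omega>) (F \<omega>) x} \<in> sets (\<Phi> \<omega>)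
    \<and> emeasure (\<Phi> \<omega>) {x \<in> supp (\<Phi> \<omega>). \<not> exhausted (\<Psi> \<omega>) (F \<omega>) x} = \<infinity>"
proof -
  have "AE \<omega> in P. {x \<in> supp (\<Phi> \<omega>). site_load \<omega> x \<noteq> 1} \<in> sets (\<Phi> \<omega>)
      \<and> emeasure (\<Phi> \<omega>) {x \<in> supp (\<Phi> \<omega>). site_load \<omega> x \<noteq> 1} = \<infinity>"
    by (rule deficit_zero_or_infinity(2)[OF \<Phi> measurable_site_load AE_site_load_le_1 site_load_flow ergodic])
      (use assms in \<open>simp_all add: site_deficit_def\<close>)
  with AE_stable show ?thesis
  proof eventually_elim
    case (elim \<omega>)
    then show ?case
      by (auto simp: exhausted_iff_site_load constrained_density_def
          intro: stable_sated_if_infinite_unexhausted)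
  qed
qed

lemma AE_unsated_infinite_if_center_deficit_ne_0:
  assumes "center_deficit \<noteq> 0"
  shows "AE \<omega> in P. (\<forall>x\<in>supp (\<Phi> \<omega>). exhausted (\<Psi> \<omega>) (F \<omega>) x)
    \<and> {\<xi> \<in> supp (\<Psi> \<omega>). \<not> sated (\<Phi> \<omega>) (F \<omega>) \<xi>} \<in> sets (\<Psi> \<omega>)
    \<and> emeasure (\<Psi> \<omega>) {\<xi> \<in> supp (\<Psi> \<omega>). \<not> sated (\<Phi> \<omega>) (F \<omega>) \<xi>} = \<infinity>"
proof -
  have "AE \<omega> in P. {\<xi> \<in> supp (\<Psi> \<omega>). center_load \<omega> \<xi> \<noteq> 1} \<in> sets (\<Psi> \<omega>)
      \<and> emeasure (\<Psi> \<omega>) {\<xi> \<in> supp (\<Psi> \<omega>). center_load \<omega> \<xi> \<noteq> 1} = \<infinity>"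
    by (rule deficit_zero_or_infinity(2)[OF \<Psi> measurable_center_load AE_center_load_le_1 center_load_flow ergodic])
      (use assms in \<open>simp_all add: center_deficit_def\<close>)
  with AE_stable show ?thesis
  proof eventually_elim
    case (elim \<omega>)
    then show ?case
      by (auto simp: sated_iff_center_load constrained_density_def
          intro: stable_exhausted_if_infinite_unsated)
  qed
qed

lemma site_deficit_eq_0_or_center_deficit_eq_0: "site_deficit = 0 \<or> center_deficit = 0"
proof (rule ccontr)
  assume "\<not> (site_deficit = 0 \<or> center_deficit = 0)"
  then have "site_deficit \<noteq> 0" "center_deficit \<noteq> 0"
    by simp_all
  from AE_unexhausted_infinite_if_site_deficit_ne_0[OF this(1)]
    AE_unsated_infinite_if_center_deficit_ne_0[OF this(2)]
  have "AE \<omega> in P. False"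
  proof eventually_elim
    case (elim \<omega>)
    then have "{\<xi> \<in> supp (\<Psi> \<omega>). \<not> sated (\<Phi> \<omega>) (F \<omega>) \<xi>} = {}"
      by auto
    with elim show False
      by simp
  qed
  then show False
    using prob_space.AE_False[OF prob_space] by simp
qed

lemma deficits_eq_0_if_equal_intensities:
  assumes "has_intensity P \<Phi> l" and "has_intensity P \<Psi> l"
  shows "site_deficit = 0" and "center_deficit = 0"
proof -
  have "ennreal l * emeasure lborel (ball (0::'v) 1) \<noteq> \<infinity>"
    using emeasure_lborel_unit_ball[where 'v='v] by (simp add: ennreal_mult_eq_top_iff)
  then have "site_deficit = center_deficit"
    using deficit_balance[OF assms] by (simp add: ennreal_add_left_cancel add.commute[of site_deficit])
  then show "site_deficit = 0" "center_deficit = 0"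
    using site_deficit_eq_0_or_center_deficit_eq_0 by auto
qed

lemma center_deficit_ne_0_if_less_intensity:
  assumes "has_intensity P \<Phi> l\<Phi>" and "has_intensity P \<Psi> l\<Psi>" and "0 \<le> l\<Phi>" and "l\<Phi> < l\<Psi>"
  shows "center_deficit \<noteq> 0"
proof
  assume "center_deficit = 0"
  with deficit_balance[OF assms(1,2)]
  have "ennreal l\<Psi> * emeasure lborel (ball (0::'v) 1) \<le> ennreal l\<Phi> * emeasure lborel (ball (0::'v) 1)"
    by (metis add.commute add_0 le_iff_add)
  moreover have "ennreal l\<Phi> * emeasure lborel (ball (0::'v) 1) < ennreal l\<Psi> * emeasure lborel (ball (0::'v) 1)"
    using assms(3,4) emeasure_lborel_unit_ball[where 'v='v]
    by (intro ennreal_mult_strict_right_mono) (auto simp: ennreal_less_iff)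
  ultimately show False
    by simp
qed

lemma site_deficit_ne_0_if_greater_intensity:
  assumes "has_intensity P \<Phi> l\<Phi>" and "has_intensity P \<Psi> l\<Psi>" and "0 \<le> l\<Psi>" and "l\<Psi> < l\<Phi>"
  shows "site_deficit \<noteq> 0"
proof
  assume "site_deficit = 0"
  with deficit_balance[OF assms(1,2)]
  have "ennreal l\<Phi> * emeasure lborel (ball (0::'v) 1) \<le> ennreal l\<Psi> * emeasure lborel (ball (0::'v) 1)"
    by (metis add.commute add_0 le_iff_add)
  moreover have "ennreal l\<Psi> * emeasure lborel (ball (0::'v) 1) < ennreal l\<Phi> * emeasure lborel (ball (0::'v) 1)"
    using assms(3,4) emeasure_lborel_unit_ball[where 'v='v]
    by (intro ennreal_mult_strict_right_mono) (auto simp: ennreal_less_iff)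
  ultimately show False
    by simp
qed

end

lemma stable_density_fieldI:
  assumes "ergodic_rm P \<theta> \<Phi>" and "ergodic_rm P \<theta> \<Psi>"
    and "(\<lambda>(\<omega>, x, y). F \<omega> x y) \<in> borel_measurable (P \<Otimes>\<^sub>M lborel \<Otimes>\<^sub>M lborel)"
    and "flow_adapted_fun P \<theta> F"
    and "AE \<omega> in P. constrained_density (\<Phi> \<omega>) (\<Psi> \<omega>) (F \<omega>) \<and> stable (\<Phi> \<omega>) (\<Psi> \<omega>) (F \<omega>)"
  shows "stable_density_field P \<theta> \<Phi> \<Psi> F"
  using assms
  by (auto simp: stable_density_field_def stable_density_field_axioms_def stationary_flow_def
      stationary_flow.adapted_random_measure_def stationary_flow.ergodic_def ergodic_rm_def stationary_rm_def)

theorem mainTheorem7: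
  fixes P :: "'w measure"
    and \<theta> :: "'v::euclidean_space \<Rightarrow> 'w \<Rightarrow> 'w"
    and \<Phi> \<Psi> :: "'w \<Rightarrow> 'v measure"
    and F :: "'w \<Rightarrow> 'v \<Rightarrow> 'v \<Rightarrow> real"
    and l\<Phi> l\<Psi> :: real
  assumes erg\<Phi>: "ergodic_rm P \<theta> \<Phi>"
    and erg\<Psi>: "ergodic_rm P \<theta> \<Psi>"
    and int\<Phi>: "has_intensity P \<Phi> l\<Phi>" and pos\<Phi>: "0 < l\<Phi>"
    and int\<Psi>: "has_intensity P \<Psi> l\<Psi>" and pos\<Psi>: "0 < l\<Psi>"
    and Fmeas: "(\<lambda>(\<omega>, x, y). F \<omega> x y) \<in> borel_measurable (P \<Otimes>\<^sub>M lborel \<Otimes>\<^sub>M lborel)"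
    and Fnonneg: "\<forall>\<omega> x y. 0 \<le> F \<omega> x y"
    and Fadapt: "flow_adapted_fun P \<theta> F"
    and Fstable: "AE \<omega> in P. constrained_density (\<Phi> \<omega>) (\<Psi> \<omega>) (F \<omega>) \<and> stable (\<Phi> \<omega>) (\<Psi> \<omega>) (F \<omega>)"
  shows "(l\<Phi> = l\<Psi> \<longrightarrow>
            (AE \<omega> in P. (AE x in \<Phi> \<omega>. exhausted (\<Psi> \<omega>) (F \<omega>) x) \<and>
                         (AE \<xi> in \<Psi> \<omega>. sated (\<Phi> \<omega>) (F \<omega>) \<xi>)))
       \<and> (l\<Phi> < l\<Psi> \<longrightarrow>
            (AE \<omega> in P. (\<forall>x\<in>supp (\<Phi> \<omega>). exhausted (\<Psi> \<omega>) (F \<omega>) x) \<and>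
                         {\<xi>\<in>supp (\<Psi> \<omega>). \<not> sated (\<Phi> \<omega>) (F \<omega>) \<xi>} \<in> sets (\<Psi> \<omega>) \<and>
                         emeasure (\<Psi> \<omega>) {\<xi>\<in>supp (\<Psi> \<omega>). \<not> sated (\<Phi> \<omega>) (F \<omega>) \<xi>} = \<infinity>))
       \<and> (l\<Phi> > l\<Psi> \<longrightarrow>
            (AE \<omega> in P. (\<forall>\<xi>\<in>supp (\<Psi> \<omega>). sated (\<Phi> \<omega>) (F \<omega>) \<xi>) \<and>
                         {x\<in>supp (\<Phi> \<omega>). \<not> exhausted (\<Psi> \<omega>) (F \<omega>) x} \<in> sets (\<Phi> \<omega>) \<and>
                         emeasure (\<Phi> \<omega>) {x\<in>supp (\<Phi> \<omega>). \<not> exhausted (\<Psi> \<omega>) (F \<omega>) x} = \<infinity>))"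
proof -
  interpret stable_density_field P \<theta> \<Phi> \<Psi> F
    using erg\<Phi> erg\<Psi> Fmeas Fadapt Fstable by (rule stable_density_fieldI)
  have "site_deficit = 0" "center_deficit = 0" if "l\<Phi> = l\<Psi>"
    using deficits_eq_0_if_equal_intensities[OF int\<Phi>] int\<Psi> that by simp_all
  moreover have "center_deficit \<noteq> 0" if "l\<Phi> < l\<Psi>"
    using center_deficit_ne_0_if_less_intensity[OF int\<Phi> int\<Psi>] pos\<Phi> that by simp
  moreover have "site_deficit \<noteq> 0" if "l\<Phi> > l\<Psi>"
    using site_deficit_ne_0_if_greater_intensity[OF int\<Phi> int\<Psi>] pos\<Psi> that by simp
  ultimately show ?thesis
    using AE_exhausted_if_site_deficit_eq_0 AE_sated_if_center_deficit_eq_0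
      AE_unsated_infinite_if_center_deficit_ne_0 AE_unexhausted_infinite_if_site_deficit_ne_0
    by (simp add: AE_conj_iff)
qed

end
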